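(* Let $c:\mathbb{T}\to[0,1]$ and $\epsilon>0$. Then there exist $r\in[0,1]$ and an increasing sequence $\mu_i$ ($i<\infty$) of elements of $\mathbb{A}$ such that $|c(\mu_i)-r|<\epsilon$ for all $i$, and $|c(\mu_i\,\hat{}\,\mu_j)-r|<\epsilon$ for all $i<j$.
   Context: For $a,b\subseteq(0,1]$ put $a\,\hat{}\,b=\tfrac12 a\cup\tfrac12(b+1)$. $\mathbb{T}$ is the set of finite subsets of $(0,1]$ generated from $\mathbf{1}=\{1\}$ by $\hat{}$; $(\mathbb{T},\hat{},\mathbf{1})$ is the free binary system on one generator. For $t\in\mathbb{T}$, $\#(t)$ is its cardinality, and $\mathbb{T}_n=\{t\in\mathbb{T}:\#(t)=n\}$ (a finite set). $\mathbb{A}_n$ is the set of probability measures on $\mathbb{T}_n$ (convex combinations of elements of $\mathbb{T}_n$), $\mathbb{A}$ is the disjoint union of the $\mathbb{A}_n$, and $\#(\nu)=n$ for $\nu\in\mathbb{A}_n$. The operation $\hat{}$ extends bilinearly to $\mathbb{A}$: $(\mu\,\hat{}\,\nu)(E)=\sum_{a\hat{}b\in E}\mu(\{a\})\nu(\{b\})$. A function $c:\mathbb{T}\to\mathbb{R}$ is extended linearly to $\mathbb{A}$: $c(\nu)=\sum_t \nu(\{t\})c(t)$. A sequence $\mu_i$ in $\mathbb{A}$ is increasing if $i<j$ implies $\#(\mu_i)<\#(\mu_j)$. *)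

theory Defs
  imports "HOL-Probability.Probability_Mass_Function"
begin

definition hat :: "real set \<Rightarrow> real set \<Rightarrow> real set" where
  "hat a b = (\<lambda>x. x / 2) ` a \<union> (\<lambda>x. (x + 1) / 2) ` b"

text \<open>The free binary system T generated from {1} by hat.\<close>
inductive_set Tset :: "real set set" where
  one: "{1} \<in> Tset"
| hat: "a \<in> Tset \<Longrightarrow> b \<in> Tset \<Longrightarrow> hat a b \<in> Tset"

definition Tn :: "nat \<Rightarrow> real set set" where
  "Tn n = {t \<in> Tset. card t = n}"

definition An :: "nat \<Rightarrow> real set pmf set" where
  "An n = {\<nu>. set_pmf \<nu> \<subseteq> Tn n}"

text \<open>Bilinear extension of hat to measures: image of the product measure.\<close>
definition hatA :: "real set pmf \<Rightarrow> real set pmf \<Rightarrow> real set pmf" where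
  "hatA \<mu> \<nu> = map_pmf (\<lambda>(a, b). hat a b) (pair_pmf \<mu> \<nu>)"

definition cA :: "(real set \<Rightarrow> real) \<Rightarrow> real set pmf \<Rightarrow> real" where
  "cA c \<nu> = (\<Sum>t\<in>set_pmf \<nu>. pmf \<nu> t * c t)"

end

theory Submission
  imports Defs
begin

text \<open>Fix a nonprincipal idempotent ultrafilter \<open>e = e + e\<close> on \<open>\<nat>\<close> (Ellis--Numakura;
  Zorn's lemma and the ultrafilter lemma replace compactness of \<open>\<beta>\<nat>\<close>) and an ultrafilter \<open>U\<^sub>0\<close>
  on \<open>\<T>\<close> whose image under \<open>#\<close> is \<open>e\<close>. As \<open>#(a ^ b) = #a + #b\<close>, the iterated squares
  \<open>U\<^sub>n\<^sub>+\<^sub>1 = U\<^sub>n ^ U\<^sub>n\<close> again have image \<open>e\<close>. Colour \<open>t\<close> by \<open>\<lfloor>c t / \<epsilon>\<rfloor>\<close>; every \<open>U\<^sub>n\<close> has a colour \<open>v\<^sub>n\<close>,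
  and as \<open>v\<close> is bounded there are \<open>a\<close>, \<open>b\<close> with \<open>v\<^sub>a \<le> v\<^sub>a\<^sub>+\<^sub>1\<close> and \<open>v\<^sub>b\<^sub>+\<^sub>1 \<le> v\<^sub>b\<close>. Since \<open>U\<^sub>a\<close> and \<open>U\<^sub>b\<close>
  have the same image under \<open>#\<close>, a diagonal construction yields \<open>T\<^sub>i\<close> along \<open>U\<^sub>a\<close> and \<open>S\<^sub>i\<close> along
  \<open>U\<^sub>b\<close> with \<open>#T\<^sub>i = #S\<^sub>i\<close> increasing, such that single elements and all four kinds of pairs
  \<open>T\<^sub>i ^ T\<^sub>j\<close>, \<open>T\<^sub>i ^ S\<^sub>j\<close>, ... (\<open>i < j\<close>) carry the colours of the corresponding ultrafilters.
  By the intermediate value theorem a weight \<open>l\<close> makes the mean colour of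
  \<open>\<mu>\<^sub>i = (1 - l) T\<^sub>i + l S\<^sub>i\<close> equal to that of \<open>\<mu>\<^sub>i ^ \<mu>\<^sub>j\<close>; \<open>\<epsilon>\<close> times this mean is \<open>r\<close>.\<close>


section \<open>Ultrafilters as families of sets\<close>

definition proper_filter :: "'a set set \<Rightarrow> bool" where
  "proper_filter F \<longleftrightarrow> {} \<notin> F \<and> UNIV \<in> F \<and> (\<forall>A B. A \<in> F \<longrightarrow> A \<subseteq> B \<longrightarrow> B \<in> F) \<and>
     (\<forall>A\<in>F. \<forall>B\<in>F. A \<inter> B \<in> F)"

definition ultrafilter :: "'a set set \<Rightarrow> bool" where
  "ultrafilter p \<longleftrightarrow> proper_filter p \<and> (\<forall>A. A \<in> p \<or> - A \<in> p)"

lemma proper_filterD: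
  assumes "proper_filter F"
  shows "{} \<notin> F" "UNIV \<in> F" "A \<in> F \<Longrightarrow> A \<subseteq> B \<Longrightarrow> B \<in> F"
    "A \<in> F \<Longrightarrow> B \<in> F \<Longrightarrow> A \<inter> B \<in> F"
  using assms unfolding proper_filter_def by blast+

lemma ultrafilterD:
  assumes "ultrafilter p"
  shows "{} \<notin> p" "UNIV \<in> p" "A \<in> p \<Longrightarrow> A \<subseteq> B \<Longrightarrow> B \<in> p"
    "A \<in> p \<Longrightarrow> B \<in> p \<Longrightarrow> A \<inter> B \<in> p" "A \<in> p \<or> - A \<in> p"
  using assms proper_filterD unfolding ultrafilter_def by blast+

lemma ultrafilter_Compl_iff: "ultrafilter p \<Longrightarrow> - A \<in> p \<longleftrightarrow> A \<notin> p"
  using ultrafilterD(1)[of p] ultrafilterD(4)[of p A "- A"] ultrafilterD(5)[of p A] by auto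

lemma ultrafilter_Int_iff: "ultrafilter p \<Longrightarrow> A \<inter> B \<in> p \<longleftrightarrow> A \<in> p \<and> B \<in> p"
  by (meson inf_le1 inf_le2 ultrafilterD(3,4))

lemma ultrafilter_Un_iff: "ultrafilter p \<Longrightarrow> A \<union> B \<in> p \<longleftrightarrow> A \<in> p \<or> B \<in> p"
proof -
  assume p: "ultrafilter p"
  have "- (A \<union> B) = - A \<inter> - B" by blast
  then show ?thesis
    using ultrafilter_Compl_iff[OF p, of "A \<union> B"] ultrafilter_Int_iff[OF p, of "- A" "- B"]
      ultrafilter_Compl_iff[OF p, of A] ultrafilter_Compl_iff[OF p, of B] by argo
qed

lemma ultrafilter_nonempty: "ultrafilter p \<Longrightarrow> A \<in> p \<Longrightarrow> A \<noteq> {}"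
  using ultrafilterD(1) by blast

lemma ultrafilter_eqI:
  assumes "ultrafilter p" "ultrafilter q" "p \<subseteq> q"
  shows "p = q"
proof (rule subset_antisym[OF assms(3) subsetI])
  fix A assume "A \<in> q"
  then have "- A \<notin> q" using ultrafilter_Compl_iff[OF assms(2)] by blast
  then show "A \<in> p" using assms(3) ultrafilter_Compl_iff[OF assms(1)] by blast
qed

lemma proper_filter_Union_chain:
  assumes "C \<noteq> {}" and "\<And>F. F \<in> C \<Longrightarrow> proper_filter F" and "\<And>F G. F \<in> C \<Longrightarrow> G \<in> C \<Longrightarrow> F \<subseteq> G \<or> G \<subseteq> F"
  shows "proper_filter (\<Union>C)"
  unfolding proper_filter_def
proof (intro conjI allI impI ballI)
  show "{} \<notin> \<Union>C" "UNIV \<in> \<Union>C"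
    using assms(1,2) proper_filterD(1,2) by blast+
  show "B \<in> \<Union>C" if "A \<in> \<Union>C" "A \<subseteq> B" for A B
    using that assms(2) proper_filterD(3) by blast
  show "A \<inter> B \<in> \<Union>C" if AB: "A \<in> \<Union>C" "B \<in> \<Union>C" for A B
  proof -
    obtain F G where "F \<in> C" "A \<in> F" "G \<in> C" "B \<in> G" using AB by blast
    moreover have "F \<subseteq> G \<or> G \<subseteq> F" using assms(3) calculation by blast
    ultimately show ?thesis using assms(2) proper_filterD(4) by (metis UnionI subsetD)
  qed
qed

lemma proper_filter_upclosure:
  assumes "B \<noteq> {}" and "{} \<notin> B" and "\<And>X Y. X \<in> B \<Longrightarrow> Y \<in> B \<Longrightarrow> X \<inter> Y \<in> B"
  shows "proper_filter {A. \<exists>X\<in>B. X \<subseteq> A}"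
  unfolding proper_filter_def
proof (intro conjI allI impI ballI)
  show "{} \<notin> {A. \<exists>X\<in>B. X \<subseteq> A}" "UNIV \<in> {A. \<exists>X\<in>B. X \<subseteq> A}"
    using assms(1,2) by auto
  show "A' \<in> {A. \<exists>X\<in>B. X \<subseteq> A}" if "A \<in> {A. \<exists>X\<in>B. X \<subseteq> A}" "A \<subseteq> A'" for A A'
    using that by blast
  show "A \<inter> A' \<in> {A. \<exists>X\<in>B. X \<subseteq> A}"
    if AA': "A \<in> {A. \<exists>X\<in>B. X \<subseteq> A}" "A' \<in> {A. \<exists>X\<in>B. X \<subseteq> A}" for A A'
  proof -
    obtain X Y where "X \<in> B" "X \<subseteq> A" "Y \<in> B" "Y \<subseteq> A'" using AA' by blast
    then show ?thesis using assms(3)[of X Y] by blast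
  qed
qed

lemma maximal_proper_filter_is_ultrafilter:
  assumes M: "proper_filter M" and max: "\<And>G. proper_filter G \<Longrightarrow> M \<subseteq> G \<Longrightarrow> G = M"
  shows "ultrafilter M"
proof -
  have "A \<in> M \<or> - A \<in> M" for A
  proof (rule ccontr)
    assume A: "\<not> (A \<in> M \<or> - A \<in> M)"
    let ?B = "(\<lambda>X. X \<inter> A) ` M" let ?G = "{B. \<exists>X\<in>?B. X \<subseteq> B}"
    have "proper_filter ?G"
    proof (rule proper_filter_upclosure)
      show "?B \<noteq> {}" using proper_filterD(2)[OF M] by (metis empty_iff image_eqI)
      show "{} \<notin> ?B"
      proof
        assume "{} \<in> ?B"
        then obtain X where "X \<in> M" "X \<subseteq> - A" by auto
        then show False using A proper_filterD(3)[OF M] by blast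
      qed
      show "X \<inter> Y \<in> ?B" if XY: "X \<in> ?B" "Y \<in> ?B" for X Y
      proof -
        obtain X' Y' where "X' \<in> M" "Y' \<in> M" "X = X' \<inter> A" "Y = Y' \<inter> A" using XY by auto
        moreover have "X' \<inter> Y' \<in> M" using calculation proper_filterD(4)[OF M] by simp
        moreover have "X \<inter> Y = (X' \<inter> Y') \<inter> A" using calculation by blast
        ultimately show ?thesis by (simp add: rev_image_eqI)
      qed
    qed
    moreover have "M \<subseteq> ?G" by fastforce
    ultimately have "?G = M" by (rule max)
    moreover have "A \<in> ?G" using proper_filterD(2)[OF M] by auto
    ultimately show False using A by blast
  qed
  then show ?thesis using M unfolding ultrafilter_def by blast
qed

lemma proper_filter_extends_to_ultrafilter:
  assumes "proper_filter F"
  obtains p where "ultrafilter p" "F \<subseteq> p"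
proof -
  let ?S = "{G. proper_filter G \<and> F \<subseteq> G}"
  have "\<exists>M\<in>?S. \<forall>G\<in>?S. M \<subseteq> G \<longrightarrow> G = M"
  proof (rule Zorn_Lemma2, intro ballI)
    fix C assume C: "C \<in> chains ?S"
    show "\<exists>U\<in>?S. \<forall>G\<in>C. G \<subseteq> U"
    proof (cases "C = {}")
      case True then show ?thesis using assms by blast
    next
      case False
      have "proper_filter (\<Union>C)"
      proof (rule proper_filter_Union_chain[OF False])
        show "proper_filter G" if "G \<in> C" for G using C that chainsD2 by blast
        show "G \<subseteq> H \<or> H \<subseteq> G" if "G \<in> C" "H \<in> C" for G H using C that chainsD by blast
      qed
      moreover have "F \<subseteq> \<Union>C" using C False by (auto dest: chainsD2)
      ultimately show ?thesis by blast
    qed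
  qed
  then obtain M where M: "proper_filter M" "F \<subseteq> M"
    and max: "\<And>G. proper_filter G \<Longrightarrow> F \<subseteq> G \<Longrightarrow> M \<subseteq> G \<Longrightarrow> G = M"
    by auto
  have "ultrafilter M"
    using M(2) by (intro maximal_proper_filter_is_ultrafilter[OF M(1)] max) auto
  then show thesis using M(2) by (rule that)
qed

lemma filter_base_extends_to_ultrafilter:
  assumes "B \<noteq> {}" and "{} \<notin> B" and "\<And>X Y. X \<in> B \<Longrightarrow> Y \<in> B \<Longrightarrow> X \<inter> Y \<in> B"
  obtains p where "ultrafilter p" "B \<subseteq> p"
proof -
  obtain p where p: "ultrafilter p" "{A. \<exists>X\<in>B. X \<subseteq> A} \<subseteq> p"
    using proper_filter_extends_to_ultrafilter[OF proper_filter_upclosure[OF assms]] .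
  have "B \<subseteq> p" using p(2) by blast
  with p(1) show thesis by (rule that)
qed


section \<open>An idempotent ultrafilter on the natural numbers\<close>

text \<open>The image under \<open>f\<close> of the product ultrafilter: \<open>X\<close> is large iff for \<open>p\<close>-almost all \<open>x\<close>
  and then \<open>q\<close>-almost all \<open>y\<close> one has \<open>f x y \<in> X\<close>.\<close>

definition ultra_prod :: "('a \<Rightarrow> 'b \<Rightarrow> 'c) \<Rightarrow> 'a set set \<Rightarrow> 'b set set \<Rightarrow> 'c set set" where
  "ultra_prod f p q = {X. {x. f x -` X \<in> q} \<in> p}"

lemma mem_ultra_prod_iff: "X \<in> ultra_prod f p q \<longleftrightarrow> {x. f x -` X \<in> q} \<in> p"
  unfolding ultra_prod_def by simp

lemma ultrafilter_ultra_prod: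
  assumes p: "ultrafilter p" and q: "ultrafilter q"
  shows "ultrafilter (ultra_prod f p q)"
  unfolding ultrafilter_def proper_filter_def mem_ultra_prod_iff
proof (intro conjI allI impI ballI)
  show "{x. f x -` {} \<in> q} \<notin> p" "{x. f x -` UNIV \<in> q} \<in> p"
    using ultrafilterD(1,2)[OF p] ultrafilterD(1,2)[OF q] by simp_all
  show "{x. f x -` B \<in> q} \<in> p" if AB: "{x. f x -` A \<in> q} \<in> p" "A \<subseteq> B" for A B
  proof -
    have "f x -` A \<in> q \<Longrightarrow> f x -` B \<in> q" for x
      using ultrafilterD(3)[OF q] vimage_mono[OF AB(2)] by metis
    then have "{x. f x -` A \<in> q} \<subseteq> {x. f x -` B \<in> q}" by blast
    then show ?thesis by (rule ultrafilterD(3)[OF p AB(1)])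
  qed
  have "{x. f x -` (A \<inter> B) \<in> q} = {x. f x -` A \<in> q} \<inter> {x. f x -` B \<in> q}" for A B
    by (simp add: ultrafilter_Int_iff[OF q] Collect_conj_eq)
  then show "{x. f x -` (A \<inter> B) \<in> q} \<in> p"
    if "A \<in> ultra_prod f p q" "B \<in> ultra_prod f p q" for A B
    using that ultrafilterD(4)[OF p] by (simp add: mem_ultra_prod_iff)
  have "{x. f x -` (- A) \<in> q} = - {x. f x -` A \<in> q}" for A
    by (simp add: vimage_Compl ultrafilter_Compl_iff[OF q] Collect_neg_eq)
  then show "{x. f x -` A \<in> q} \<in> p \<or> {x. f x -` (- A) \<in> q} \<in> p" for A
    using ultrafilterD(5)[OF p] by simp
qed

abbreviation uplus :: "nat set set \<Rightarrow> nat set set \<Rightarrow> nat set set" where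
  "uplus \<equiv> ultra_prod (+)"

lemma uplus_assoc: "uplus (uplus p q) r = uplus p (uplus q r)"
  unfolding ultra_prod_def vimage_def by (simp add: add.assoc)

definition plus_section :: "nat set set \<Rightarrow> nat set \<Rightarrow> nat set" where
  "plus_section e X = {n. (+) n -` X \<in> e}"

lemma mem_uplus_iff_section: "X \<in> uplus p e \<longleftrightarrow> plus_section e X \<in> p"
  unfolding mem_ultra_prod_iff plus_section_def ..

lemma plus_section_Int:
  "ultrafilter e \<Longrightarrow> plus_section e (X \<inter> Y) = plus_section e X \<inter> plus_section e Y"
  by (simp add: plus_section_def ultrafilter_Int_iff Collect_conj_eq)

lemma plus_section_Compl: "ultrafilter e \<Longrightarrow> plus_section e (- X) = - plus_section e X"
  by (simp add: plus_section_def vimage_Compl ultrafilter_Compl_iff Collect_neg_eq)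

lemma plus_section_UNIV: "ultrafilter e \<Longrightarrow> plus_section e UNIV = UNIV"
  by (simp add: plus_section_def ultrafilterD(2))

definition frechet :: "nat set set" where
  "frechet = {A. \<exists>k. {k..} \<subseteq> A}"

lemma proper_filter_frechet: "proper_filter frechet"
  unfolding proper_filter_def frechet_def
proof (intro conjI allI impI ballI)
  show "{} \<notin> {A. \<exists>k::nat. {k..} \<subseteq> A}" by auto
  show "A \<inter> B \<in> {A. \<exists>k. {k..} \<subseteq> A}"
    if AB: "A \<in> {A. \<exists>k::nat. {k..} \<subseteq> A}" "B \<in> {A. \<exists>k::nat. {k..} \<subseteq> A}" for A B
  proof -
    obtain k l :: nat where "{k..} \<subseteq> A" "{l..} \<subseteq> B" using AB by blast
    then have "{max k l..} \<subseteq> A \<inter> B" by auto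
    then show ?thesis by blast
  qed
qed auto

lemma frechet_subset_uplus:
  assumes "ultrafilter p" "ultrafilter q" "frechet \<subseteq> q"
  shows "frechet \<subseteq> uplus p q"
proof
  fix A assume "A \<in> frechet"
  then obtain k where "{k..} \<subseteq> A" unfolding frechet_def by blast
  then have "{k..} \<subseteq> (+) n -` A" for n by (auto simp: subset_eq)
  then have "(+) n -` A \<in> q" for n
    using assms(3) ultrafilterD(3)[OF assms(2)] unfolding frechet_def by blast
  then show "A \<in> uplus p q"
    unfolding mem_ultra_prod_iff using ultrafilterD(2)[OF assms(1)] by simp
qed

text \<open>Compact subsets of the Stone-Cech compactification \<open>\<beta>\<nat>\<close> are the sets \<open>ultras_above H\<close>;
  the proof below is Ellis's theorem for a minimal compact subsemigroup of \<open>\<beta>\<nat>\<close>,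
  with compactness replaced by the ultrafilter lemma.\<close>

definition ultras_above :: "'a set set \<Rightarrow> 'a set set set" where
  "ultras_above H = {p. ultrafilter p \<and> H \<subseteq> p}"

lemma ultras_above_nonempty:
  assumes "proper_filter F"
  shows "ultras_above F \<noteq> {}"
proof -
  obtain p where "ultrafilter p" "F \<subseteq> p" using proper_filter_extends_to_ultrafilter[OF assms] .
  then show ?thesis unfolding ultras_above_def by blast
qed

lemma proper_filter_Inter_ultras_above:
  "ultras_above H \<noteq> {} \<Longrightarrow> proper_filter (\<Inter> (ultras_above H))"
  unfolding proper_filter_def ultras_above_def
  by (auto dest: ultrafilterD(1)) (meson ultrafilterD(2,3,4))+

lemma ultras_above_Inter_ultras_above: "ultras_above (\<Inter> (ultras_above H)) = ultras_above H"
  unfolding ultras_above_def by blast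

definition plus_closed :: "nat set set set \<Rightarrow> bool" where
  "plus_closed S \<longleftrightarrow> (\<forall>p\<in>S. \<forall>q\<in>S. uplus p q \<in> S)"

text \<open>Right translation by \<open>e\<close> maps closed sets of \<open>\<beta>\<nat>\<close> to closed sets.\<close>

lemma right_translate_ultras_above:
  assumes F: "proper_filter F" and e: "ultrafilter e" and r: "ultrafilter r"
    and sub: "{X. \<forall>p\<in>ultras_above F. X \<in> uplus p e} \<subseteq> r"
  shows "r \<in> (\<lambda>p. uplus p e) ` ultras_above F"
proof -
  let ?B = "{Y \<inter> plus_section e X |Y X. Y \<in> F \<and> X \<in> r}"
  obtain p where p: "ultrafilter p" "?B \<subseteq> p"
  proof (rule filter_base_extends_to_ultrafilter)
    show "?B \<noteq> {}" using proper_filterD(2)[OF F] ultrafilterD(2)[OF r] by blast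
    show "{} \<notin> ?B"
    proof
      assume "{} \<in> ?B"
      then obtain Y X where Y: "Y \<in> F" and X: "X \<in> r" and YX: "Y \<inter> plus_section e X = {}"
        by auto
      have "- X \<in> uplus q e" if q: "q \<in> ultras_above F" for q
      proof -
        have "ultrafilter q" "Y \<in> q" using q Y unfolding ultras_above_def by auto
        then have "plus_section e X \<notin> q" using YX ultrafilterD(1,4) by metis
        then show ?thesis
          by (simp add: mem_uplus_iff_section plus_section_Compl[OF e]
              ultrafilter_Compl_iff[OF \<open>ultrafilter q\<close>])
      qed
      then have "- X \<in> r" using sub by blast
      then show False using X ultrafilter_Compl_iff[OF r] by blast
    qed
    show "U \<inter> V \<in> ?B" if UV: "U \<in> ?B" "V \<in> ?B" for U V
    proof -
      obtain Y X Y' X' where "Y \<in> F" "X \<in> r" "Y' \<in> F" "X' \<in> r"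
        and "U = Y \<inter> plus_section e X" "V = Y' \<inter> plus_section e X'"
        using UV by blast
      moreover have "Y \<inter> Y' \<in> F" "X \<inter> X' \<in> r"
        using calculation proper_filterD(4)[OF F] ultrafilterD(4)[OF r] by auto
      moreover have "U \<inter> V = (Y \<inter> Y') \<inter> plus_section e (X \<inter> X')"
        using calculation by (auto simp: plus_section_Int[OF e])
      ultimately show ?thesis by (intro CollectI exI[of _ "Y \<inter> Y'"] exI[of _ "X \<inter> X'"]) simp
    qed
  qed
  have "F \<subseteq> p"
  proof
    fix Y assume "Y \<in> F"
    then have "Y \<inter> plus_section e UNIV \<in> ?B" using ultrafilterD(2)[OF r] by blast
    then show "Y \<in> p" using p(2) by (auto simp: plus_section_UNIV[OF e])
  qed
  moreover have "r \<subseteq> uplus p e"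
  proof
    fix X assume "X \<in> r"
    then have "UNIV \<inter> plus_section e X \<in> ?B" using proper_filterD(2)[OF F] by blast
    then show "X \<in> uplus p e" using p(2) by (auto simp: mem_uplus_iff_section)
  qed
  ultimately show ?thesis
    using ultrafilter_eqI[OF r ultrafilter_ultra_prod[OF p(1) e]] p(1)
    unfolding ultras_above_def by blast
qed


definition semigroup_filters :: "nat set set set" where
  "semigroup_filters = {F. proper_filter F \<and> frechet \<subseteq> F \<and> plus_closed (ultras_above F)}"

lemma frechet_in_semigroup_filters: "frechet \<in> semigroup_filters"
  unfolding semigroup_filters_def plus_closed_def
proof (intro CollectI conjI ballI proper_filter_frechet order.refl)
  fix p q assume "p \<in> ultras_above frechet" "q \<in> ultras_above frechet"
  then show "uplus p q \<in> ultras_above frechet"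
    using ultrafilter_ultra_prod frechet_subset_uplus unfolding ultras_above_def by blast
qed

lemma semigroup_filters_Union_chain:
  assumes "C \<noteq> {}" "C \<subseteq> semigroup_filters" and chain: "\<And>F G. F \<in> C \<Longrightarrow> G \<in> C \<Longrightarrow> F \<subseteq> G \<or> G \<subseteq> F"
  shows "\<Union>C \<in> semigroup_filters"
proof -
  have C: "\<And>F. F \<in> C \<Longrightarrow> proper_filter F \<and> frechet \<subseteq> F \<and> plus_closed (ultras_above F)"
    using assms(2) unfolding semigroup_filters_def by blast
  have "proper_filter (\<Union>C)"
    by (rule proper_filter_Union_chain[OF assms(1)]) (use C chain in blast)+
  moreover have "frechet \<subseteq> \<Union>C" using assms(1) C by blast
  moreover have "plus_closed (ultras_above (\<Union>C))"
    unfolding plus_closed_def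
  proof (intro ballI)
    fix p q assume pq: "p \<in> ultras_above (\<Union>C)" "q \<in> ultras_above (\<Union>C)"
    have "F \<subseteq> uplus p q" if F: "F \<in> C" for F
    proof -
      have "p \<in> ultras_above F" "q \<in> ultras_above F" using pq F unfolding ultras_above_def by auto
      then have "uplus p q \<in> ultras_above F" using C[OF F] unfolding plus_closed_def by blast
      then show ?thesis unfolding ultras_above_def by blast
    qed
    moreover have "ultrafilter (uplus p q)"
      using pq unfolding ultras_above_def by (simp add: ultrafilter_ultra_prod)
    ultimately show "uplus p q \<in> ultras_above (\<Union>C)" unfolding ultras_above_def by blast
  qed
  ultimately show ?thesis unfolding semigroup_filters_def by blast
qed

lemma maximal_semigroup_filter_exists:
  obtains M where "M \<in> semigroup_filters" "\<And>F. F \<in> semigroup_filters \<Longrightarrow> M \<subseteq> F \<Longrightarrow> F = M"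
proof -
  have "\<exists>M\<in>semigroup_filters. \<forall>F\<in>semigroup_filters. M \<subseteq> F \<longrightarrow> F = M"
  proof (rule Zorn_Lemma2, intro ballI)
    fix C assume C: "C \<in> chains semigroup_filters"
    show "\<exists>U\<in>semigroup_filters. \<forall>F\<in>C. F \<subseteq> U"
    proof (cases "C = {}")
      case True
      then show ?thesis using frechet_in_semigroup_filters by blast
    next
      case False
      have "\<Union>C \<in> semigroup_filters"
        using False C by (intro semigroup_filters_Union_chain) (auto dest: chainsD chainsD2)
      then show ?thesis by blast
    qed
  qed
  then show thesis using that by auto
qed

text \<open>A maximal element of \<open>semigroup_filters\<close> describes a minimal compact subsemigroup.\<close>

lemma ultras_above_minimal:
  assumes M: "M \<in> semigroup_filters" and max: "\<And>F. F \<in> semigroup_filters \<Longrightarrow> M \<subseteq> F \<Longrightarrow> F = M"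
    and H: "M \<subseteq> H" "ultras_above H \<noteq> {}" "plus_closed (ultras_above H)"
  shows "ultras_above H = ultras_above M"
proof -
  have sub: "M \<subseteq> \<Inter> (ultras_above H)" using H(1) unfolding ultras_above_def by blast
  moreover have "frechet \<subseteq> M" using M unfolding semigroup_filters_def by blast
  ultimately have "\<Inter> (ultras_above H) \<in> semigroup_filters"
    using H(3) proper_filter_Inter_ultras_above[OF H(2)]
    unfolding semigroup_filters_def by (auto simp: ultras_above_Inter_ultras_above)
  from this sub have "\<Inter> (ultras_above H) = M" by (rule max)
  then show ?thesis using ultras_above_Inter_ultras_above[of H] by simp
qed

lemma maximal_semigroup_filter_ex_uplus_eq:
  assumes M: "M \<in> semigroup_filters" and max: "\<And>F. F \<in> semigroup_filters \<Longrightarrow> M \<subseteq> F \<Longrightarrow> F = M"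
    and eS: "e \<in> ultras_above M"
  shows "\<exists>p\<in>ultras_above M. uplus p e = e"
proof -
  have Mp: "proper_filter M" and Ms: "plus_closed (ultras_above M)"
    using M unfolding semigroup_filters_def by auto
  have e: "ultrafilter e" using eS unfolding ultras_above_def by blast
  have plus_e: "uplus p e \<in> ultras_above M" if "p \<in> ultras_above M" for p
    using Ms that eS unfolding plus_closed_def by blast
  define G where "G = {X. \<forall>p\<in>ultras_above M. X \<in> uplus p e}"
  have translate: "ultras_above (M \<union> G) = (\<lambda>p. uplus p e) ` ultras_above M"
  proof
    show "ultras_above (M \<union> G) \<subseteq> (\<lambda>p. uplus p e) ` ultras_above M"
      using right_translate_ultras_above[OF Mp e] unfolding ultras_above_def G_def by blast
    show "(\<lambda>p. uplus p e) ` ultras_above M \<subseteq> ultras_above (M \<union> G)"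
      using plus_e unfolding ultras_above_def G_def by blast
  qed
  have "plus_closed (ultras_above (M \<union> G))"
    unfolding translate plus_closed_def
  proof (intro ballI)
    fix a b assume "a \<in> (\<lambda>p. uplus p e) ` ultras_above M" "b \<in> (\<lambda>p. uplus p e) ` ultras_above M"
    then obtain p q where p: "p \<in> ultras_above M" "a = uplus p e"
      and q: "q \<in> ultras_above M" "b = uplus q e" by blast
    have "uplus (uplus p e) q \<in> ultras_above M"
      using Ms plus_e[OF p(1)] q(1) unfolding plus_closed_def by blast
    moreover have "uplus a b = uplus (uplus (uplus p e) q) e" using p q by (simp add: uplus_assoc)
    ultimately show "uplus a b \<in> (\<lambda>p. uplus p e) ` ultras_above M" by blast
  qed
  then have "ultras_above (M \<union> G) = ultras_above M"
    using translate eS by (intro ultras_above_minimal[OF M max]) auto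
  then have "e \<in> (\<lambda>p. uplus p e) ` ultras_above M" using translate eS by simp
  then show ?thesis by (auto simp: eq_commute)
qed

lemma ultras_above_stabiliser:
  assumes e: "ultrafilter e"
  shows "ultras_above (M \<union> {plus_section e X | X. X \<in> e}) = {p \<in> ultras_above M. uplus p e = e}"
proof (intro equalityI subsetI)
  fix p assume "p \<in> ultras_above (M \<union> {plus_section e X | X. X \<in> e})"
  then have up: "ultrafilter p" and "M \<subseteq> p" and sections: "\<And>X. X \<in> e \<Longrightarrow> plus_section e X \<in> p"
    unfolding ultras_above_def by blast+
  have "e \<subseteq> uplus p e" using sections by (auto simp: mem_uplus_iff_section)
  then have "e = uplus p e" by (rule ultrafilter_eqI[OF e ultrafilter_ultra_prod[OF up e]])
  then show "p \<in> {p \<in> ultras_above M. uplus p e = e}"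
    using up \<open>M \<subseteq> p\<close> unfolding ultras_above_def by simp
next
  fix p assume p: "p \<in> {p \<in> ultras_above M. uplus p e = e}"
  have "plus_section e X \<in> p" if "X \<in> e" for X
  proof -
    have "X \<in> uplus p e" using that p by simp
    then show ?thesis by (simp add: mem_uplus_iff_section)
  qed
  then show "p \<in> ultras_above (M \<union> {plus_section e X | X. X \<in> e})"
    using p unfolding ultras_above_def by auto
qed

text \<open>Ellis' argument: for \<open>e\<close> in a minimal compact semigroup \<open>S\<close>, first \<open>S + e = S\<close>, so that the
  stabiliser \<open>{p \<in> S. p + e = e}\<close> is a nonempty compact subsemigroup, hence all of \<open>S\<close>.\<close>

lemma idempotent_ultrafilter_exists:
  obtains e where "ultrafilter e" "frechet \<subseteq> e" "uplus e e = e"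
proof -
  obtain M where M: "M \<in> semigroup_filters"
    and max: "\<And>F. F \<in> semigroup_filters \<Longrightarrow> M \<subseteq> F \<Longrightarrow> F = M"
    by (rule maximal_semigroup_filter_exists) auto
  have Mp: "proper_filter M" and Mf: "frechet \<subseteq> M" and Ms: "plus_closed (ultras_above M)"
    using M unfolding semigroup_filters_def by auto
  obtain e where eS: "e \<in> ultras_above M" using ultras_above_nonempty[OF Mp] by blast
  then have e: "ultrafilter e" unfolding ultras_above_def by blast
  let ?H = "M \<union> {plus_section e X | X. X \<in> e}"
  have "plus_closed (ultras_above ?H)"
    unfolding ultras_above_stabiliser[OF e] plus_closed_def
    using Ms by (auto simp: plus_closed_def uplus_assoc)
  moreover have "ultras_above ?H \<noteq> {}"
    using maximal_semigroup_filter_ex_uplus_eq[OF M max eS]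
    unfolding ultras_above_stabiliser[OF e] by blast
  ultimately have "ultras_above ?H = ultras_above M"
    by (intro ultras_above_minimal[OF M max]) auto
  then have "uplus e e = e" using eS ultras_above_stabiliser[OF e] by blast
  moreover have "frechet \<subseteq> e" using eS Mf unfolding ultras_above_def by blast
  ultimately show thesis using e by (intro that)
qed


section \<open>Pairs of sequences along two ultrafilters\<close>

lemma ultra_pair_sequences:
  fixes f :: "'a \<Rightarrow> 'a \<Rightarrow> 'b" and g :: "'a \<Rightarrow> nat"
  assumes U: "ultrafilter U" and V: "ultrafilter V"
    and pick: "\<forall>A\<in>U. \<forall>B\<in>V. \<forall>N. \<exists>t\<in>A. \<exists>s\<in>B. g t = g s \<and> N < g t"
    and A: "A \<in> U" and B: "B \<in> V"
    and Q: "Quu \<in> ultra_prod f U U" "Quv \<in> ultra_prod f U V"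
      "Qvu \<in> ultra_prod f V U" "Qvv \<in> ultra_prod f V V"
  shows "\<exists>x y :: nat \<Rightarrow> 'a. strict_mono (g \<circ> x) \<and> (\<forall>i. x i \<in> A \<and> y i \<in> B \<and> g (x i) = g (y i)) \<and>
    (\<forall>i j. i < j \<longrightarrow> f (x i) (x j) \<in> Quu \<and> f (x i) (y j) \<in> Quv \<and> f (y i) (x j) \<in> Qvu \<and> f (y i) (y j) \<in> Qvv)"
proof -
  define DA where "DA = A \<inter> {t. f t -` Quu \<in> U \<and> f t -` Quv \<in> V}"
  define DB where "DB = B \<inter> {s. f s -` Qvu \<in> U \<and> f s -` Qvv \<in> V}"
  have "DA \<in> U" "DB \<in> V"
    using A B Q U V unfolding DA_def DB_def mem_ultra_prod_iff Collect_conj_eq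
    by (simp_all add: ultrafilter_Int_iff)
  text \<open>A state \<open>((t, s), (A', B'))\<close> holds the last pair chosen and the sets of admissible
    successors; successors of \<open>t\<close> and \<open>s\<close> must lie in the corresponding large sections.\<close>
  define P :: "nat \<Rightarrow> ('a \<times> 'a) \<times> 'a set \<times> 'a set \<Rightarrow> bool"
    where "P = (\<lambda>n z. fst (snd z) \<in> U \<and> snd (snd z) \<in> V \<and>
    fst (snd z) \<subseteq> DA \<and> snd (snd z) \<subseteq> DB)"
  define R :: "nat \<Rightarrow> ('a \<times> 'a) \<times> 'a set \<times> 'a set \<Rightarrow> ('a \<times> 'a) \<times> 'a set \<times> 'a set \<Rightarrow> bool"
    where "R = (\<lambda>n z z'. fst (fst z') \<in> fst (snd z) \<and> snd (fst z') \<in> snd (snd z) \<and>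
    g (fst (fst z')) = g (snd (fst z')) \<and> g (fst (fst z)) < g (fst (fst z')) \<and>
    fst (snd z') = fst (snd z) \<inter> f (fst (fst z')) -` Quu \<inter> f (snd (fst z')) -` Qvu \<and>
    snd (snd z') = snd (snd z) \<inter> f (fst (fst z')) -` Quv \<inter> f (snd (fst z')) -` Qvv)"
  have "\<exists>z. \<forall>n. P n (z n) \<and> R n (z n) (z (Suc n))"
  proof (rule dependent_nat_choice)
    obtain t0 where "t0 \<in> A" using A U ultrafilter_nonempty by blast
    then show "\<exists>z. P 0 z" using \<open>DA \<in> U\<close> \<open>DB \<in> V\<close> unfolding P_def by (intro exI[of _ "((t0, t0), (DA, DB))"]) auto
  next
    fix z n assume Pz: "P n z"
    obtain t s where ts: "t \<in> fst (snd z)" "s \<in> snd (snd z)" "g t = g s" "g (fst (fst z)) < g t"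
      using pick Pz unfolding P_def by blast
    define A' where "A' = fst (snd z) \<inter> f t -` Quu \<inter> f s -` Qvu"
    define B' where "B' = snd (snd z) \<inter> f t -` Quv \<inter> f s -` Qvv"
    have "t \<in> DA" "s \<in> DB" using ts Pz unfolding P_def by auto
    then have "A' \<in> U" "B' \<in> V"
      using Pz U V unfolding A'_def B'_def P_def DA_def DB_def by (simp_all add: ultrafilter_Int_iff)
    then have "P (Suc n) ((t, s), (A', B'))" using Pz unfolding P_def A'_def B'_def by auto
    moreover have "R n z ((t, s), (A', B'))" using ts unfolding R_def A'_def B'_def by simp
    ultimately show "\<exists>z'. P (Suc n) z' \<and> R n z z'" by blast
  qed
  then obtain z where P: "\<And>n. P n (z n)" and R: "\<And>n. R n (z n) (z (Suc n))" by blast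
  define x where "x i = fst (fst (z (Suc i)))" for i
  define y where "y i = snd (fst (z (Suc i)))" for i
  define As where "As i = fst (snd (z i))" for i
  define Bs where "Bs i = snd (snd (z i))" for i
  have step: "x i \<in> As i" "y i \<in> Bs i" "g (x i) = g (y i)"
    "As (Suc i) = As i \<inter> f (x i) -` Quu \<inter> f (y i) -` Qvu"
    "Bs (Suc i) = Bs i \<inter> f (x i) -` Quv \<inter> f (y i) -` Qvv" for i
    using R[of i] unfolding R_def x_def y_def As_def Bs_def by auto
  have "g (x i) < g (x (Suc i))" for i using R[of "Suc i"] unfolding R_def x_def by simp
  then have "strict_mono (g \<circ> x)" by (simp add: strict_mono_Suc_iff)
  moreover have "x i \<in> A \<and> y i \<in> B \<and> g (x i) = g (y i)" for i
    using P[of i] step(1-3)[of i] unfolding P_def As_def Bs_def DA_def DB_def by auto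
  moreover have "f (x i) (x j) \<in> Quu \<and> f (x i) (y j) \<in> Quv \<and> f (y i) (x j) \<in> Qvu \<and> f (y i) (y j) \<in> Qvv"
    if "i < j" for i j
  proof -
    have "As (Suc n) \<subseteq> As n" "Bs (Suc n) \<subseteq> Bs n" for n using step(4,5) by auto
    then have "As j \<subseteq> As (Suc i)" "Bs j \<subseteq> Bs (Suc i)"
      using \<open>i < j\<close> by (simp_all add: lift_Suc_antimono_le)
    then show ?thesis using step(1,2)[of j] step(4,5)[of i] by auto
  qed
  ultimately show ?thesis by blast
qed


section \<open>Ultrafilters on the free binary system\<close>

lemma Tset_finite_subset: "t \<in> Tset \<Longrightarrow> finite t \<and> t \<subseteq> {0<..1}"
  by (induction rule: Tset.induct) (auto simp: hat_def)

lemma card_hat: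
  assumes "a \<in> Tset" "b \<in> Tset"
  shows "card (hat a b) = card a + card b"
proof -
  have a: "finite a" "a \<subseteq> {0<..1}" and b: "finite b" "b \<subseteq> {0<..1}"
    using Tset_finite_subset assms by auto
  have "(\<lambda>x. x / 2) ` a \<inter> (\<lambda>x. (x + 1) / 2) ` b = {}"
    using a(2) b(2) by fastforce
  moreover have "inj_on (\<lambda>x::real. x / 2) a" "inj_on (\<lambda>x::real. (x + 1) / 2) b"
    by (auto simp: inj_on_def)
  ultimately show ?thesis
    unfolding hat_def using a(1) b(1) by (simp add: card_Un_disjoint card_image)
qed

lemma ex_Tset_card: "0 < n \<Longrightarrow> \<exists>t\<in>Tset. card t = n"
proof (induction n)
  case (Suc n)
  show ?case
  proof (cases "n = 0")
    case False
    then obtain t where "t \<in> Tset" "card t = n" using Suc.IH by blast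
    then show ?thesis using Tset.hat[of t "{1}"] Tset.one card_hat[of t "{1}"] by force
  qed (use Tset.one in force)
qed simp

definition card_ultra :: "nat set set \<Rightarrow> real set set set \<Rightarrow> bool" where
  "card_ultra e U \<longleftrightarrow> ultrafilter U \<and> Tset \<in> U \<and> (\<forall>X\<in>e. card -` X \<in> U)"

lemma card_ultra_exists:
  assumes e: "ultrafilter e" "frechet \<subseteq> e"
  obtains U where "card_ultra e U"
proof -
  let ?B = "(\<lambda>X. Tset \<inter> card -` X) ` e"
  obtain U where U: "ultrafilter U" "?B \<subseteq> U"
  proof (rule filter_base_extends_to_ultrafilter)
    show "?B \<noteq> {}" using ultrafilterD(2)[OF e(1)] by blast
    show "{} \<notin> ?B"
    proof
      assume "{} \<in> ?B"
      then obtain X where X: "X \<in> e" "Tset \<inter> card -` X = {}" by auto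
      have "{1..} \<in> e" using e(2) unfolding frechet_def by blast
      then have "X \<inter> {1..} \<in> e" using X(1) ultrafilterD(4)[OF e(1)] by blast
      then obtain n where "n \<in> X" "0 < n" using ultrafilter_nonempty[OF e(1)] by fastforce
      moreover obtain t where "t \<in> Tset" "card t = n" using ex_Tset_card[OF \<open>0 < n\<close>] by blast
      ultimately show False using X(2) by blast
    qed
    show "Y \<inter> Z \<in> ?B" if YZ: "Y \<in> ?B" "Z \<in> ?B" for Y Z
    proof -
      obtain X X' where "X \<in> e" "X' \<in> e" "Y = Tset \<inter> card -` X" "Z = Tset \<inter> card -` X'"
        using YZ by blast
      moreover have "X \<inter> X' \<in> e" using calculation ultrafilterD(4)[OF e(1)] by blast
      moreover have "Y \<inter> Z = Tset \<inter> card -` (X \<inter> X')" using calculation by auto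
      ultimately show ?thesis by blast
    qed
  qed
  have "Tset \<in> U" using U(2) ultrafilterD(2)[OF e(1)] by auto
  moreover have "card -` X \<in> U" if "X \<in> e" for X
    using U that ultrafilterD(3)[OF U(1), of "Tset \<inter> card -` X"] by blast
  ultimately have "card_ultra e U" unfolding card_ultra_def using U(1) by blast
  then show thesis by (rule that)
qed

text \<open>By additivity of \<open>card\<close> on \<open>hat\<close>, the image of \<open>U ^ V\<close> under \<open>card\<close> is \<open>e + e = e\<close>.\<close>

lemma card_ultra_hat:
  assumes e: "ultrafilter e" "uplus e e = e" and U: "card_ultra e U" and V: "card_ultra e V"
  shows "card_ultra e (ultra_prod hat U V)"
proof -
  have U': "ultrafilter U" "Tset \<in> U" and V': "ultrafilter V" "Tset \<in> V"
    using U V unfolding card_ultra_def by auto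
  have "Tset \<inter> card -` plus_section e X \<subseteq> {t. hat t -` (Tset \<inter> card -` X) \<in> V}" if "X \<in> e" for X
  proof
    fix t assume t: "t \<in> Tset \<inter> card -` plus_section e X"
    then have "card -` ((+) (card t) -` X) \<in> V"
      using V unfolding card_ultra_def plus_section_def by auto
    then have "Tset \<inter> card -` ((+) (card t) -` X) \<in> V" using V'(2) ultrafilterD(4)[OF V'(1)] by blast
    moreover have "Tset \<inter> card -` ((+) (card t) -` X) \<subseteq> hat t -` (Tset \<inter> card -` X)"
      using t card_hat Tset.hat by auto
    ultimately show "t \<in> {t. hat t -` (Tset \<inter> card -` X) \<in> V}" using ultrafilterD(3)[OF V'(1)] by blast
  qed
  moreover have "Tset \<inter> card -` plus_section e X \<in> U" if "X \<in> e" for X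
  proof -
    have "plus_section e X \<in> e" using that e(2) by (simp flip: mem_uplus_iff_section)
    then show ?thesis using U unfolding card_ultra_def by (simp add: ultrafilter_Int_iff)
  qed
  ultimately have large: "Tset \<inter> card -` X \<in> ultra_prod hat U V" if "X \<in> e" for X
    using that ultrafilterD(3)[OF U'(1)] unfolding mem_ultra_prod_iff by blast
  have W: "ultrafilter (ultra_prod hat U V)" by (rule ultrafilter_ultra_prod[OF U'(1) V'(1)])
  have "Tset \<in> ultra_prod hat U V" using large[of UNIV] ultrafilterD(2)[OF e(1)] by simp
  moreover have "card -` X \<in> ultra_prod hat U V" if "X \<in> e" for X
    using large[OF that] ultrafilterD(3)[OF W] by blast
  ultimately show ?thesis using W unfolding card_ultra_def by blast
qed

lemma card_image_in_ultra:
  assumes e: "ultrafilter e" and U: "card_ultra e U" and A: "A \<in> U"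
  shows "card ` A \<in> e"
proof (rule ccontr)
  assume "card ` A \<notin> e"
  then have "card -` (- card ` A) \<in> U" using U ultrafilter_Compl_iff[OF e] unfolding card_ultra_def by blast
  then have "A \<inter> card -` (- card ` A) \<in> U" using A U ultrafilterD(4) unfolding card_ultra_def by blast
  moreover have "A \<inter> card -` (- card ` A) = {}" by auto
  ultimately show False using U ultrafilterD(1) unfolding card_ultra_def by metis
qed

lemma card_ultra_pick:
  assumes e: "ultrafilter e" "frechet \<subseteq> e" and U: "card_ultra e U" and V: "card_ultra e V"
    and "A \<in> U" "B \<in> V"
  shows "\<exists>t\<in>A. \<exists>s\<in>B. card t = card s \<and> N < card t"
proof -
  have "{Suc N..} \<in> e" using e(2) unfolding frechet_def by blast
  then have "card ` A \<inter> card ` B \<inter> {Suc N..} \<in> e"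
    using card_image_in_ultra[OF e(1)] assms(3-6) by (simp add: ultrafilter_Int_iff[OF e(1)])
  then obtain n where "n \<in> card ` A" "n \<in> card ` B" "Suc N \<le> n"
    using ultrafilter_nonempty[OF e(1)] by blast
  then show ?thesis by force
qed


section \<open>Colourings\<close>

lemma ultrafilter_bounded_colour:
  assumes U: "ultrafilter U" and "{t. \<gamma> t \<le> (K::nat)} \<in> U"
  shows "\<exists>k\<le>K. \<gamma> -` {k} \<in> U"
  using assms(2)
proof (induction K)
  case 0
  then show ?case by (simp add: vimage_def)
next
  case (Suc K)
  have "{t. \<gamma> t \<le> Suc K} = {t. \<gamma> t \<le> K} \<union> \<gamma> -` {Suc K}" by auto
  then have "{t. \<gamma> t \<le> K} \<in> U \<or> \<gamma> -` {Suc K} \<in> U"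
    using Suc.prems ultrafilter_Un_iff[OF U] by simp
  then show ?case using Suc.IH le_SucI by blast
qed

definition ultra_colour :: "('a \<Rightarrow> nat) \<Rightarrow> 'a set set \<Rightarrow> nat" where
  "ultra_colour \<gamma> U = (SOME k. \<gamma> -` {k} \<in> U)"

lemma ultra_colour_in:
  assumes "ultrafilter U" "{t. \<gamma> t \<le> K} \<in> U"
  shows "\<gamma> -` {ultra_colour \<gamma> U} \<in> U"
  unfolding ultra_colour_def using ultrafilter_bounded_colour[OF assms] by (metis someI)

lemma card_ultra_colour_in:
  assumes "card_ultra e U" "\<forall>t\<in>Tset. \<gamma> t \<le> K"
  shows "\<gamma> -` {ultra_colour \<gamma> U} \<in> U"
proof -
  have "Tset \<subseteq> {t. \<gamma> t \<le> K}" using assms(2) by blast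
  then have "{t. \<gamma> t \<le> K} \<in> U" using assms(1) ultrafilterD(3) unfolding card_ultra_def by blast
  then show ?thesis using assms(1) ultra_colour_in unfolding card_ultra_def by blast
qed

lemma nat_seq_step_up: "\<exists>a. (v :: nat \<Rightarrow> nat) a \<le> v (Suc a)"
  using ex_has_least_nat[of "\<lambda>_. True" _ v] by blast

lemma bounded_nat_seq_step_down:
  assumes "\<And>n. (v :: nat \<Rightarrow> nat) n \<le> K"
  shows "\<exists>b. v (Suc b) \<le> v b"
proof -
  obtain b where "\<forall>n. K - v b \<le> K - v n" using ex_has_least_nat[of "\<lambda>_. True" 0 "\<lambda>n. K - v n"] by blast
  then show ?thesis using assms[of b] assms[of "Suc b"] by (metis diff_le_mono2 diff_diff_cancel)
qed

lemma quadratic_mix_ivt: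
  fixes \<alpha> \<beta> \<kappa>\<^sub>1 \<kappa>\<^sub>2 \<kappa>\<^sub>3 \<kappa>\<^sub>4 :: real
  assumes "\<alpha> \<le> \<kappa>\<^sub>1" "\<kappa>\<^sub>4 \<le> \<beta>"
  obtains l where "0 \<le> l" "l \<le> 1"
    "(1 - l) * \<alpha> + l * \<beta> = (1 - l) * (1 - l) * \<kappa>\<^sub>1 + (1 - l) * l * \<kappa>\<^sub>2 + l * (1 - l) * \<kappa>\<^sub>3 + l * l * \<kappa>\<^sub>4"
proof -
  define h where "h l = (1 - l) * \<alpha> + l * \<beta> -
    ((1 - l) * (1 - l) * \<kappa>\<^sub>1 + (1 - l) * l * \<kappa>\<^sub>2 + l * (1 - l) * \<kappa>\<^sub>3 + l * l * \<kappa>\<^sub>4)" for l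
  have "\<exists>l. 0 \<le> l \<and> l \<le> 1 \<and> h l = 0"
    by (rule IVT') (use assms in \<open>auto simp: h_def intro!: continuous_intros\<close>)
  then show thesis using that unfolding h_def by auto
qed

lemma card_ultra_colour_le:
  assumes "card_ultra e U" "\<forall>t\<in>Tset. \<gamma> t \<le> K"
  shows "ultra_colour \<gamma> U \<le> K"
proof -
  have "Tset \<inter> \<gamma> -` {ultra_colour \<gamma> U} \<in> U"
    using assms card_ultra_colour_in[OF assms] unfolding card_ultra_def by (simp add: ultrafilter_Int_iff)
  then obtain t where "t \<in> Tset" "\<gamma> t = ultra_colour \<gamma> U"
    using assms(1) ultrafilter_nonempty unfolding card_ultra_def by blast
  then show ?thesis using assms(2) by auto
qed

lemma card_ultra_colour_sequences:
  fixes \<gamma> :: "real set \<Rightarrow> nat"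
  assumes e: "ultrafilter e" "frechet \<subseteq> e" "uplus e e = e"
    and U: "card_ultra e U" and V: "card_ultra e V" and bound: "\<forall>t\<in>Tset. \<gamma> t \<le> K"
  shows "\<exists>T S :: nat \<Rightarrow> real set. strict_mono (card \<circ> T) \<and>
    (\<forall>i. T i \<in> Tset \<and> \<gamma> (T i) = ultra_colour \<gamma> U \<and> S i \<in> Tset \<and> \<gamma> (S i) = ultra_colour \<gamma> V \<and>
      card (T i) = card (S i)) \<and>
    (\<forall>i j. i < j \<longrightarrow>
      \<gamma> (hat (T i) (T j)) = ultra_colour \<gamma> (ultra_prod hat U U) \<and>
      \<gamma> (hat (T i) (S j)) = ultra_colour \<gamma> (ultra_prod hat U V) \<and>
      \<gamma> (hat (S i) (T j)) = ultra_colour \<gamma> (ultra_prod hat V U) \<and>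
      \<gamma> (hat (S i) (S j)) = ultra_colour \<gamma> (ultra_prod hat V V))"
proof -
  let ?col = "\<lambda>W. \<gamma> -` {ultra_colour \<gamma> W}"
  have UV: "ultrafilter U" "ultrafilter V" using U V unfolding card_ultra_def by auto
  have pick: "\<forall>A\<in>U. \<forall>B\<in>V. \<forall>N. \<exists>t\<in>A. \<exists>s\<in>B. card t = card s \<and> N < card t"
    using card_ultra_pick[OF e(1,2) U V] by blast
  have AB: "Tset \<inter> ?col U \<in> U" "Tset \<inter> ?col V \<in> V"
    using U V card_ultra_colour_in[OF U bound] card_ultra_colour_in[OF V bound]
    unfolding card_ultra_def by (simp_all add: ultrafilter_Int_iff)
  have Q: "?col (ultra_prod hat W W') \<in> ultra_prod hat W W'" if "W \<in> {U, V}" "W' \<in> {U, V}" for W W'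
    using that card_ultra_colour_in[OF card_ultra_hat[OF e(1,3)] bound] U V by blast
  show ?thesis
    using ultra_pair_sequences[OF UV pick AB Q Q Q Q] by simp
qed

lemma colour_balanced_sequences:
  fixes \<gamma> :: "real set \<Rightarrow> nat"
  assumes bound: "\<forall>t\<in>Tset. \<gamma> t \<le> K"
  obtains l :: real and \<alpha> \<beta> \<kappa>\<^sub>1 \<kappa>\<^sub>2 \<kappa>\<^sub>3 \<kappa>\<^sub>4 :: nat and T S :: "nat \<Rightarrow> real set"
  where "0 \<le> l" "l \<le> 1"
    "(1 - l) * \<alpha> + l * \<beta> = (1 - l) * (1 - l) * \<kappa>\<^sub>1 + (1 - l) * l * \<kappa>\<^sub>2 + l * (1 - l) * \<kappa>\<^sub>3 + l * l * \<kappa>\<^sub>4"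
    "strict_mono (card \<circ> T)" "\<And>i. card (T i) = card (S i)"
    "\<And>i. T i \<in> Tset \<and> S i \<in> Tset \<and> \<gamma> (T i) = \<alpha> \<and> \<gamma> (S i) = \<beta>"
    "\<And>i j. i < j \<Longrightarrow> \<gamma> (hat (T i) (T j)) = \<kappa>\<^sub>1 \<and> \<gamma> (hat (T i) (S j)) = \<kappa>\<^sub>2 \<and>
       \<gamma> (hat (S i) (T j)) = \<kappa>\<^sub>3 \<and> \<gamma> (hat (S i) (S j)) = \<kappa>\<^sub>4"
proof -
  obtain e where e: "ultrafilter e" "frechet \<subseteq> e" "uplus e e = e"
    by (rule idempotent_ultrafilter_exists) auto
  obtain U0 where "card_ultra e U0" using card_ultra_exists[OF e(1,2)] .
  define Us where "Us n = ((\<lambda>W. ultra_prod hat W W) ^^ n) U0" for n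
  have Us: "card_ultra e (Us n)" for n
    by (induction n) (simp_all add: Us_def \<open>card_ultra e U0\<close> card_ultra_hat[OF e(1,3)])
  have sq: "Us (Suc n) = ultra_prod hat (Us n) (Us n)" for n unfolding Us_def by simp
  define v where "v n = ultra_colour \<gamma> (Us n)" for n
  obtain a where a: "v a \<le> v (Suc a)" using nat_seq_step_up by blast
  have "v n \<le> K" for n unfolding v_def by (rule card_ultra_colour_le[OF Us bound])
  then obtain b where b: "v (Suc b) \<le> v b" using bounded_nat_seq_step_down by blast
  let ?\<kappa>\<^sub>2 = "ultra_colour \<gamma> (ultra_prod hat (Us a) (Us b))"
  let ?\<kappa>\<^sub>3 = "ultra_colour \<gamma> (ultra_prod hat (Us b) (Us a))"
  obtain l :: real where l: "0 \<le> l" "l \<le> 1" "(1 - l) * v a + l * v b =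
      (1 - l) * (1 - l) * v (Suc a) + (1 - l) * l * ?\<kappa>\<^sub>2 + l * (1 - l) * ?\<kappa>\<^sub>3 + l * l * v (Suc b)"
    by (rule quadratic_mix_ivt[of "v a" "v (Suc a)" "v (Suc b)" "v b" ?\<kappa>\<^sub>2 ?\<kappa>\<^sub>3]) (use a b in auto)
  obtain T S :: "nat \<Rightarrow> real set" where TS: "strict_mono (card \<circ> T) \<and>
    (\<forall>i. T i \<in> Tset \<and> \<gamma> (T i) = v a \<and> S i \<in> Tset \<and> \<gamma> (S i) = v b \<and> card (T i) = card (S i)) \<and>
    (\<forall>i j. i < j \<longrightarrow> \<gamma> (hat (T i) (T j)) = v (Suc a) \<and> \<gamma> (hat (T i) (S j)) = ?\<kappa>\<^sub>2 \<and>
      \<gamma> (hat (S i) (T j)) = ?\<kappa>\<^sub>3 \<and> \<gamma> (hat (S i) (S j)) = v (Suc b))"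
    using card_ultra_colour_sequences[OF e Us Us bound, of a b] unfolding v_def sq by blast
  show thesis
  proof (rule that[OF l])
    show "strict_mono (card \<circ> T)" "card (T i) = card (S i)"
      "T i \<in> Tset \<and> S i \<in> Tset \<and> \<gamma> (T i) = v a \<and> \<gamma> (S i) = v b" for i
      using TS by blast+
    show "\<gamma> (hat (T i) (T j)) = v (Suc a) \<and> \<gamma> (hat (T i) (S j)) = ?\<kappa>\<^sub>2 \<and>
      \<gamma> (hat (S i) (T j)) = ?\<kappa>\<^sub>3 \<and> \<gamma> (hat (S i) (S j)) = v (Suc b)" if "i < j" for i j
      using TS that by blast
  qed
qed


section \<open>Averages over measures\<close>

lemma cA_eq_expectation: "finite (set_pmf \<nu>) \<Longrightarrow> cA f \<nu> = measure_pmf.expectation \<nu> f"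
  unfolding cA_def by (subst integral_measure_pmf_real[of "set_pmf \<nu>"]) (auto simp: mult.commute)

lemma cA_diff_scaled: "cA (\<lambda>t. f t - r * g t) \<nu> = cA f \<nu> - r * cA g \<nu>"
  unfolding cA_def by (simp add: algebra_simps sum_subtractf sum_distrib_left)

lemma cA_bounds:
  assumes "finite (set_pmf \<nu>)" and h: "\<And>t. t \<in> set_pmf \<nu> \<Longrightarrow> 0 \<le> h t \<and> h t < E"
  shows "0 \<le> cA h \<nu> \<and> cA h \<nu> < E"
proof
  show "0 \<le> cA h \<nu>" unfolding cA_def using h by (intro sum_nonneg) auto
  have "cA h \<nu> < (\<Sum>t\<in>set_pmf \<nu>. pmf \<nu> t * E)"
    unfolding cA_def using assms(1) set_pmf_not_empty h
    by (intro sum_strict_mono) (auto simp: set_pmf_iff intro!: mult_strict_left_mono)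
  also have "\<dots> = E"
    using sum_pmf_eq_1[OF assms(1) order.refl] by (simp add: sum_distrib_right[symmetric])
  finally show "cA h \<nu> < E" .
qed

definition mix :: "real \<Rightarrow> real set \<Rightarrow> real set \<Rightarrow> real set pmf" where
  "mix l t s = map_pmf (\<lambda>b. if b then s else t) (bernoulli_pmf l)"

lemma set_pmf_mix: "set_pmf (mix l t s) \<subseteq> {t, s}"
  unfolding mix_def by auto

lemma cA_mix:
  assumes "0 \<le> l" "l \<le> 1"
  shows "cA f (mix l t s) = (1 - l) * f t + l * f s"
proof -
  have "cA f (mix l t s) = measure_pmf.expectation (mix l t s) f"
    using finite_subset[OF set_pmf_mix] by (simp add: cA_eq_expectation)
  also have "\<dots> = measure_pmf.expectation (bernoulli_pmf l) (\<lambda>b. f (if b then s else t))"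
    unfolding mix_def by (rule integral_map_pmf)
  finally show ?thesis using assms by simp
qed

lemma set_pmf_hatA: "set_pmf (hatA \<mu> \<nu>) = (\<lambda>(a, b). hat a b) ` (set_pmf \<mu> \<times> set_pmf \<nu>)"
  unfolding hatA_def by simp

lemma cA_hatA_mix:
  assumes l: "0 \<le> l" "l \<le> 1"
  shows "cA f (hatA (mix l t s) (mix l t' s')) =
    (1 - l) * (1 - l) * f (hat t t') + (1 - l) * l * f (hat t s') + l * (1 - l) * f (hat s t') + l * l * f (hat s s')"
proof -
  define g where "g = (\<lambda>(x, y). hat (if x then s else t) (if y then s' else t'))"
  define p where "p = pair_pmf (bernoulli_pmf l) (bernoulli_pmf l)"
  have eq: "hatA (mix l t s) (mix l t' s') = map_pmf g p"
    unfolding hatA_def mix_def g_def p_def pair_map_pmf1 pair_map_pmf2 map_pmf_comp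
    by (intro map_pmf_cong) auto
  have "cA f (hatA (mix l t s) (mix l t' s')) = measure_pmf.expectation p (\<lambda>z. f (g z))"
    unfolding eq by (subst cA_eq_expectation) (simp_all add: integral_map_pmf p_def)
  also have "\<dots> = (\<Sum>z\<in>UNIV. f (g z) * pmf p z)"
    by (rule integral_measure_pmf_real) auto
  also have "(UNIV :: (bool \<times> bool) set) = {(True, True), (True, False), (False, True), (False, False)}"
    by auto
  finally show ?thesis using l by (simp add: p_def pmf_pair g_def algebra_simps)
qed


lemma nat_floor_divide_bounds:
  fixes x \<epsilon> :: real
  assumes "0 < \<epsilon>" "0 \<le> x"
  shows "\<epsilon> * nat \<lfloor>x / \<epsilon>\<rfloor> \<le> x \<and> x < \<epsilon> * nat \<lfloor>x / \<epsilon>\<rfloor> + \<epsilon>"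
proof -
  have "real (nat \<lfloor>x / \<epsilon>\<rfloor>) = of_int \<lfloor>x / \<epsilon>\<rfloor>" using assms by simp
  then show ?thesis
    using floor_divide_lower[OF assms(1), of x] floor_divide_upper[OF assms(1), of x]
    by (simp add: algebra_simps)
qed

lemma cA_close_to_colour_average:
  fixes c :: "real set \<Rightarrow> real" and \<gamma> :: "real set \<Rightarrow> nat" and \<epsilon> :: real
  assumes "finite (set_pmf \<nu>)" "set_pmf \<nu> \<subseteq> Tset"
    and "\<forall>t\<in>Tset. \<epsilon> * \<gamma> t \<le> c t \<and> c t < \<epsilon> * \<gamma> t + \<epsilon>"
  shows "\<bar>cA c \<nu> - \<epsilon> * cA (\<lambda>t. real (\<gamma> t)) \<nu>\<bar> < \<epsilon>"
proof -
  have "0 \<le> cA (\<lambda>t. c t - \<epsilon> * \<gamma> t) \<nu> \<and> cA (\<lambda>t. c t - \<epsilon> * \<gamma> t) \<nu> < \<epsilon>"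
    using assms by (intro cA_bounds) force+
  then show ?thesis by (simp add: cA_diff_scaled)
qed

lemma cA_mix_close:
  fixes c :: "real set \<Rightarrow> real" and \<gamma> :: "real set \<Rightarrow> nat" and \<epsilon> :: real
  assumes l: "0 \<le> l" "l \<le> 1" and "t \<in> Tset" "s \<in> Tset"
    and disc: "\<forall>t\<in>Tset. \<epsilon> * \<gamma> t \<le> c t \<and> c t < \<epsilon> * \<gamma> t + \<epsilon>"
  shows "\<bar>cA c (mix l t s) - \<epsilon> * ((1 - l) * \<gamma> t + l * \<gamma> s)\<bar> < \<epsilon>"
proof -
  have "finite (set_pmf (mix l t s))" "set_pmf (mix l t s) \<subseteq> Tset"
    using set_pmf_mix[of l t s] assms(3,4) finite_subset by blast+
  from cA_close_to_colour_average[OF this disc] show ?thesis by (simp add: cA_mix[OF l])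
qed

lemma cA_hatA_mix_close:
  fixes c :: "real set \<Rightarrow> real" and \<gamma> :: "real set \<Rightarrow> nat" and \<epsilon> :: real
  assumes l: "0 \<le> l" "l \<le> 1" and "t \<in> Tset" "s \<in> Tset" "t' \<in> Tset" "s' \<in> Tset"
    and disc: "\<forall>t\<in>Tset. \<epsilon> * \<gamma> t \<le> c t \<and> c t < \<epsilon> * \<gamma> t + \<epsilon>"
  shows "\<bar>cA c (hatA (mix l t s) (mix l t' s')) - \<epsilon> * ((1 - l) * (1 - l) * \<gamma> (hat t t') +
    (1 - l) * l * \<gamma> (hat t s') + l * (1 - l) * \<gamma> (hat s t') + l * l * \<gamma> (hat s s'))\<bar> < \<epsilon>"
proof -
  have "set_pmf (hatA (mix l t s) (mix l t' s')) \<subseteq> {hat t t', hat t s', hat s t', hat s s'}"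
    using set_pmf_mix unfolding set_pmf_hatA by blast
  also have "\<dots> \<subseteq> Tset" using assms(3-6) Tset.hat by auto
  finally have "set_pmf (hatA (mix l t s) (mix l t' s')) \<subseteq> Tset" .
  moreover have "finite (set_pmf (hatA (mix l t s) (mix l t' s')))"
    using finite_subset[OF set_pmf_mix] by (simp add: set_pmf_hatA)
  ultimately have "\<bar>cA c (hatA (mix l t s) (mix l t' s')) -
      \<epsilon> * cA (\<lambda>t. real (\<gamma> t)) (hatA (mix l t s) (mix l t' s'))\<bar> < \<epsilon>"
    using cA_close_to_colour_average[OF _ _ disc] by blast
  then show ?thesis by (simp add: cA_hatA_mix[OF l])
qed

theorem theorem1p2:
  fixes c :: "real set \<Rightarrow> real" and \<epsilon> :: real
  assumes "\<forall>t\<in>Tset. 0 \<le> c t \<and> c t \<le> 1"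
    and "\<epsilon> > 0"
  shows "\<exists>r::real. 0 \<le> r \<and> r \<le> 1 \<and>
           (\<exists>(\<mu> :: nat \<Rightarrow> real set pmf) (n :: nat \<Rightarrow> nat).
              strict_mono n \<and> (\<forall>i. \<mu> i \<in> An (n i)) \<and>
              (\<forall>i. \<bar>cA c (\<mu> i) - r\<bar> < \<epsilon>) \<and>
              (\<forall>i j. i < j \<longrightarrow> \<bar>cA c (hatA (\<mu> i) (\<mu> j)) - r\<bar> < \<epsilon>))"
proof -
  define \<gamma> where "\<gamma> t = nat \<lfloor>c t / \<epsilon>\<rfloor>" for t
  define K where "K = nat \<lfloor>1 / \<epsilon>\<rfloor>"
  have disc: "\<forall>t\<in>Tset. \<epsilon> * \<gamma> t \<le> c t \<and> c t < \<epsilon> * \<gamma> t + \<epsilon>"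
    using nat_floor_divide_bounds assms unfolding \<gamma>_def by auto
  have "\<forall>t\<in>Tset. \<gamma> t \<le> K"
    using assms unfolding \<gamma>_def K_def by (auto intro!: nat_mono floor_mono divide_right_mono)
  then obtain l :: real and \<alpha> \<beta> \<kappa>\<^sub>1 \<kappa>\<^sub>2 \<kappa>\<^sub>3 \<kappa>\<^sub>4 :: nat and T S :: "nat \<Rightarrow> real set" where l: "0 \<le> l" "l \<le> 1"
    and balance: "(1 - l) * \<alpha> + l * \<beta> = (1 - l) * (1 - l) * \<kappa>\<^sub>1 + (1 - l) * l * \<kappa>\<^sub>2 + l * (1 - l) * \<kappa>\<^sub>3 + l * l * \<kappa>\<^sub>4"
    and TS: "strict_mono (card \<circ> T)" "\<And>i. card (T i) = card (S i)"
      "\<And>i. T i \<in> Tset \<and> S i \<in> Tset \<and> \<gamma> (T i) = \<alpha> \<and> \<gamma> (S i) = \<beta>"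
      "\<And>i j. i < j \<Longrightarrow> \<gamma> (hat (T i) (T j)) = \<kappa>\<^sub>1 \<and> \<gamma> (hat (T i) (S j)) = \<kappa>\<^sub>2 \<and>
         \<gamma> (hat (S i) (T j)) = \<kappa>\<^sub>3 \<and> \<gamma> (hat (S i) (S j)) = \<kappa>\<^sub>4"
    by (rule colour_balanced_sequences) blast
  define r where "r = \<epsilon> * ((1 - l) * \<alpha> + l * \<beta>)"
  define \<mu> where "\<mu> i = mix l (T i) (S i)" for i
  have "\<alpha> \<le> K" "\<beta> \<le> K" using TS(3)[of 0] \<open>\<forall>t\<in>Tset. \<gamma> t \<le> K\<close> by auto
  then have "r \<le> \<epsilon> * K" using l assms(2) unfolding r_def by (simp add: convex_bound_le)
  also have "\<epsilon> * K \<le> 1" using nat_floor_divide_bounds[of \<epsilon> 1] assms(2) unfolding K_def by simp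
  finally have r: "0 \<le> r" "r \<le> 1" using l assms(2) unfolding r_def by simp_all
  have "\<mu> i \<in> An (card (T i))" for i
    using set_pmf_mix[of l "T i" "S i"] TS(2,3) unfolding An_def Tn_def \<mu>_def by auto
  moreover have "\<bar>cA c (\<mu> i) - r\<bar> < \<epsilon>" for i
    using cA_mix_close[OF l _ _ disc, of "T i" "S i"] TS(3) unfolding \<mu>_def r_def by simp
  moreover have "\<bar>cA c (hatA (\<mu> i) (\<mu> j)) - r\<bar> < \<epsilon>" if "i < j" for i j
    using cA_hatA_mix_close[OF l _ _ _ _ disc, of "T i" "S i" "T j" "S j"] TS(3)[of i] TS(3)[of j]
      TS(4)[OF that] balance
    unfolding \<mu>_def r_def by simp
  ultimately show ?thesis
    using r TS(1) by (intro exI[of _ r] conjI exI[of _ \<mu>] exI[of _ "card \<circ> T"]) auto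
qed

end
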